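(* Let $m\ge2$, let $p_1,\dots,p_m>0$ with $\sum_k p_k=1$, and let $X=(X_i)_{1\le i\le n}$, $Y=(Y_i)_{1\le i\le n}$ be independent with i.i.d. letters in $\{\alpha_1,\dots,\alpha_m\}$, $\mathbb{P}(X_1=\alpha_k)=\mathbb{P}(Y_1=\alpha_k)=p_k$. Let $N_1$ be the total number of letters $\alpha_1$ in $X$ and $Y$. Define a random sequence of pairs $(X^k,Y^k)_{0\le k\le 2n}$ of words of length $n$ as follows: $X^0=(X^0_i)_{1\le i\le n}$ and $Y^0=(Y^0_i)_{1\le i\le n}$ are independent with i.i.d. letters in $\{\alpha_2,\dots,\alpha_m\}$ and $\mathbb{P}(X^0_1=\alpha_k)=\mathbb{P}(Y^0_1=\alpha_k)=p_k/(1-p_1)$, $2\le k\le m$; given $(X^0,Y^0),\dots,(X^k,Y^k)$, the pair $(X^{k+1},Y^{k+1})$ is obtained from $(X^k,Y^k)$ by choosing uniformly at random one of the $2n-k$ positions (in $X^k$ or $Y^k$) carrying a letter different from $\alpha_1$ and replacing that letter by $\alpha_1$. Assume $N_1$ is independent of $(X^k,Y^k)_{0\le k\le 2n}$. Then for $k=0,1,\dots,2n$, \[ (X^k,Y^k)\overset{d}{=}(X,Y\mid N_1=k), \] and \[ (X^{N_1},Y^{N_1})\overset{d}{=}(X,Y). \]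
   Context: $\overset{d}{=}$ denotes equality in distribution; $(X,Y\mid N_1=k)$ denotes the conditional law of $(X,Y)$ given $N_1=k$. *)

theory Defs
  imports "HOL-Probability.Probability"
begin

text \<open>Letters alpha_1,...,alpha_m are encoded as the natural numbers 1,...,m.
  A word of length n is a list of length n; a state is a pair of words (X,Y).\<close>

definition letter_pmf :: "(nat \<Rightarrow> real) \<Rightarrow> nat \<Rightarrow> nat pmf" where
  "letter_pmf p m = embed_pmf (\<lambda>k. if k \<in> {1..m} then p k else 0)"

definition letter0_pmf :: "(nat \<Rightarrow> real) \<Rightarrow> nat \<Rightarrow> nat pmf" where
  "letter0_pmf p m = embed_pmf (\<lambda>k. if k \<in> {2..m} then p k / (1 - p 1) else 0)"

fun word_pmf :: "'a pmf \<Rightarrow> nat \<Rightarrow> 'a list pmf" where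
  "word_pmf d 0 = return_pmf []"
| "word_pmf d (Suc n) = bind_pmf d (\<lambda>x. map_pmf (\<lambda>xs. x # xs) (word_pmf d n))"

definition count1 :: "nat list \<times> nat list \<Rightarrow> nat" where
  "count1 s = count_list (fst s) 1 + count_list (snd s) 1"

definition letter_at :: "nat \<Rightarrow> nat list \<times> nat list \<Rightarrow> nat \<Rightarrow> nat" where
  "letter_at n s i = (if i < n then fst s ! i else snd s ! (i - n))"

definition free_pos :: "nat \<Rightarrow> nat list \<times> nat list \<Rightarrow> nat set" where
  "free_pos n s = {i. i < 2 * n \<and> letter_at n s i \<noteq> 1}"

definition set_letter1 :: "nat \<Rightarrow> nat list \<times> nat list \<Rightarrow> nat \<Rightarrow> nat list \<times> nat list" where
  "set_letter1 n s i = (if i < n then ((fst s)[i := 1], snd s) else (fst s, (snd s)[i - n := 1]))"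

text \<open>One step: choose uniformly a position carrying a letter different from alpha_1,
  replace it by alpha_1 (stay put if there is none, which never happens for k < 2n).\<close>
definition step :: "nat \<Rightarrow> nat list \<times> nat list \<Rightarrow> (nat list \<times> nat list) pmf" where
  "step n s = (if free_pos n s = {} then return_pmf s
               else map_pmf (set_letter1 n s) (pmf_of_set (free_pos n s)))"

fun traj :: "(nat \<Rightarrow> real) \<Rightarrow> nat \<Rightarrow> nat \<Rightarrow> nat \<Rightarrow> (nat list \<times> nat list) list pmf" where
  "traj p m n 0 = map_pmf (\<lambda>s. [s])
      (pair_pmf (word_pmf (letter0_pmf p m) n) (word_pmf (letter0_pmf p m) n))"
| "traj p m n (Suc j) = bind_pmf (traj p m n j) (\<lambda>t. map_pmf (\<lambda>s. t @ [s]) (step n (last t)))"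

end

theory Submission
  imports Defs
begin

text \<open>Let \<open>q\<close> be the law of a letter conditioned to differ from \<open>\<alpha>\<^sub>1\<close>. By induction on \<open>k\<close>,
  \<open>(X\<^sup>k, Y\<^sup>k)\<close> gives probability \<open>w(s) / binom(2n, k)\<close> to every pair \<open>s\<close> of words with exactly
  \<open>k\<close> letters \<open>\<alpha>\<^sub>1\<close>, where \<open>w(s)\<close> is the product of the \<open>q\<close>-probabilities of the other letters:
  the predecessors of such a pair with \<open>k + 1\<close> letters \<open>\<alpha>\<^sub>1\<close> are obtained by turning one of them
  back into a letter \<open>c\<close>, each has weight \<open>q(c) w(s)\<close> and moves to \<open>s\<close> with probability
  \<open>1 / (2n - k)\<close>, and \<open>binom(2n, k) (2n - k) = binom(2n, k + 1) (k + 1)\<close>.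
  The i.i.d. pair \<open>(X, Y)\<close> gives \<open>s\<close> probability \<open>p\<^sub>1^k (1 - p\<^sub>1)^(2n - k) w(s)\<close>, so conditioned on
  \<open>N\<^sub>1 = k\<close> its law is proportional, hence equal, to that of \<open>(X\<^sup>k, Y\<^sup>k)\<close>; mixing over the
  independent \<open>N\<^sub>1\<close> recovers \<open>(X, Y)\<close>.\<close>

lemma pmf_word_pmf:
  "pmf (word_pmf d n) xs = (if length xs = n then (\<Prod>x\<leftarrow>xs. pmf d x) else 0)"
proof (induction n arbitrary: xs)
  case 0
  then show ?case by (cases xs) (auto simp: pmf_return)
next
  case (Suc n)
  have cons: "pmf (map_pmf ((#) x) M) (y # ys) = (if x = y then pmf M ys else 0)" for x y ys
    and M :: "'a list pmf"
    by (auto simp: pmf_map_inj' intro: pmf_map_outside)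
  have nil: "pmf (map_pmf ((#) x) M) [] = 0" for x and M :: "'a list pmf"
    by (auto intro: pmf_map_outside)
  show ?case
  proof (cases xs)
    case Nil
    then show ?thesis by (simp add: pmf_bind nil)
  next
    case (Cons y ys)
    have "pmf (word_pmf d (Suc n)) xs = (\<integral>x. (if x = y then pmf (word_pmf d n) ys else 0) \<partial>d)"
      by (simp add: Cons pmf_bind cons)
    also have "\<dots> = (\<Sum>x\<in>{y}. (if x = y then pmf (word_pmf d n) ys else 0) * pmf d x)"
      by (rule integral_measure_pmf_real) (auto split: if_splits)
    finally show ?thesis using Suc.IH[of ys] by (simp add: Cons mult.commute)
  qed
qed

lemma pmf_embed_pmf_finite:
  assumes "finite A" and "\<And>x. x \<in> A \<Longrightarrow> 0 \<le> f x" and "sum f A = 1"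
  shows "pmf (embed_pmf (\<lambda>x. if x \<in> A then f x else 0)) x = (if x \<in> A then f x else 0)"
proof (rule pmf_embed_pmf)
  show "0 \<le> (if x \<in> A then f x else 0)" for x
    using assms(2) by simp
  have "(\<integral>\<^sup>+ x. ennreal (if x \<in> A then f x else 0) \<partial>count_space UNIV)
      = (\<Sum>x\<in>A. ennreal (f x))"
    using assms(1) by (subst nn_integral_count_space') auto
  also have "\<dots> = 1"
    using assms by (simp add: sum_ennreal)
  finally show "(\<integral>\<^sup>+ x. ennreal (if x \<in> A then f x else 0) \<partial>count_space UNIV) = 1" .
qed

lemma pmf_eq_if_proportional:
  fixes \<mu> \<nu> :: "'a pmf"
  assumes "\<And>x. pmf \<mu> x = K * pmf \<nu> x"
  shows "\<mu> = \<nu>"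
proof -
  have total: "(\<integral>\<^sup>+ x. ennreal (pmf q x) \<partial>count_space UNIV) = 1" for q :: "'a pmf"
    by (simp add: nn_integral_pmf measure_pmf.emeasure_space_1[simplified])
  obtain x where "x \<in> set_pmf \<nu>"
    using set_pmf_not_empty[of \<nu>] by blast
  then have "K \<ge> 0"
    using assms[of x] pmf_positive[of x \<nu>] pmf_nonneg[of \<mu> x] by (simp add: zero_le_mult_iff)
  then have "1 = (\<integral>\<^sup>+ x. ennreal K * ennreal (pmf \<nu> x) \<partial>count_space UNIV)"
    using total[of \<mu>] by (simp add: assms ennreal_mult)
  also have "\<dots> = ennreal K"
    by (simp add: nn_integral_cmult total)
  finally have "K = 1"
    using \<open>K \<ge> 0\<close> by simp
  then show ?thesis
    using assms by (intro pmf_eqI) simp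
qed

lemma prod_list_map_list_update:
  fixes f :: "'a \<Rightarrow> 'b::comm_monoid_mult"
  assumes "i < length xs" and "f (xs ! i) = 1"
  shows "(\<Prod>x\<leftarrow>xs[i := y]. f x) = f y * (\<Prod>x\<leftarrow>xs. f x)"
  using assms
proof (induction xs arbitrary: i)
  case (Cons x xs)
  then show ?case by (cases i) (auto simp: mult.left_commute)
qed simp

lemma prod_list_map_if_eq_mult:
  fixes a b :: "'b::comm_monoid_mult"
  shows "(\<Prod>x\<leftarrow>xs. if x = z then a else b * f x)
    = a ^ count_list xs z * b ^ (length xs - count_list xs z) * (\<Prod>x\<leftarrow>xs. if x = z then 1 else f x)"
  by (induction xs) (auto simp: Suc_diff_le count_le_length mult_ac)

lemma list_update_eq_list_update_imp:
  assumes "xs[i := y] = xs[j := y']" and "i < length xs" and "j < length xs"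
    and "xs ! i = z" and "xs ! j = z" and "y \<noteq> z" and "y' \<noteq> z"
  shows "i = j \<and> y = y'"
  using assms nth_list_update[of i xs] nth_list_update[of j xs]
  by (metis nth_list_update_eq)

lemma binomial_mult_diff: "(N choose k) * (N - k) = (N choose Suc k) * Suc k"
  by (metis binomial_absorb_comp binomial_absorption mult.commute)

section \<open>Positions in a pair of words\<close>

definition joined :: "nat list \<times> nat list \<Rightarrow> nat list" where
  "joined s = fst s @ snd s"

definition is_state :: "nat \<Rightarrow> nat list \<times> nat list \<Rightarrow> bool" where
  "is_state n s \<longleftrightarrow> length (fst s) = n \<and> length (snd s) = n"

definition ones :: "nat \<Rightarrow> nat list \<times> nat list \<Rightarrow> nat set" where
  "ones n s = {i. i < 2 * n \<and> letter_at n s i = 1}"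

definition set_letter :: "nat \<Rightarrow> nat list \<times> nat list \<Rightarrow> nat \<Rightarrow> nat \<Rightarrow> nat list \<times> nat list" where
  "set_letter n s i c =
     (if i < n then ((fst s)[i := c], snd s) else (fst s, (snd s)[i - n := c]))"

lemma set_letter1_eq_set_letter: "set_letter1 n s i = set_letter n s i 1"
  by (simp add: set_letter1_def set_letter_def)

lemma length_joined: "is_state n s \<Longrightarrow> length (joined s) = 2 * n"
  by (simp add: is_state_def joined_def)

lemma count1_eq_count_list_joined: "count1 s = count_list (joined s) 1"
  by (simp add: count1_def joined_def)

lemma letter_at_eq_joined_nth: "is_state n s \<Longrightarrow> i < 2 * n \<Longrightarrow> letter_at n s i = joined s ! i"
  by (auto simp: letter_at_def joined_def is_state_def nth_append)

lemma is_state_set_letter [simp]: "is_state n (set_letter n s i c) \<longleftrightarrow> is_state n s"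
  by (simp add: is_state_def set_letter_def)

lemma joined_set_letter:
  "is_state n s \<Longrightarrow> i < 2 * n \<Longrightarrow> joined (set_letter n s i c) = (joined s)[i := c]"
  by (auto simp: is_state_def joined_def set_letter_def list_update_append)

lemma set_letter_set_letter [simp]: "set_letter n (set_letter n s i c) i d = set_letter n s i d"
  by (simp add: set_letter_def)

lemma set_letter_letter_at: "is_state n s \<Longrightarrow> set_letter n s i (letter_at n s i) = s"
  by (auto simp: set_letter_def letter_at_def is_state_def)

lemma free_pos_eq_Diff_ones: "free_pos n s = {..<2 * n} - ones n s"
  by (auto simp: free_pos_def ones_def)

lemma ones_subset: "ones n s \<subseteq> {..<2 * n}"
  by (auto simp: ones_def)

lemma finite_ones [simp]: "finite (ones n s)"
  using ones_subset finite_subset by blast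

lemma finite_free_pos [simp]: "finite (free_pos n s)"
  by (simp add: free_pos_eq_Diff_ones)

lemma count1_eq_card_ones: "is_state n s \<Longrightarrow> count1 s = card (ones n s)"
proof -
  assume st: "is_state n s"
  have "count1 s = count_list (joined s) 1"
    by (rule count1_eq_count_list_joined)
  also have "\<dots> = card {i. i < 2 * n \<and> joined s ! i = 1}"
    using st by (simp add: count_list_eq_length_filter length_filter_conv_card length_joined eq_commute)
  also have "\<dots> = card (ones n s)"
    using st by (auto simp: ones_def letter_at_eq_joined_nth intro: arg_cong[where f = card])
  finally show ?thesis .
qed

lemma card_free_pos: "is_state n s \<Longrightarrow> card (free_pos n s) = 2 * n - count1 s"
  by (simp add: free_pos_eq_Diff_ones count1_eq_card_ones card_Diff_subset ones_subset)

lemma ones_set_letter: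
  assumes "is_state n s" and "i < 2 * n"
  shows "ones n (set_letter n s i c) = (if c = 1 then insert i (ones n s) else ones n s - {i})"
  using assms
  by (auto simp: ones_def letter_at_eq_joined_nth joined_set_letter length_joined nth_list_update
      split: if_splits)

lemma count1_set_letter1:
  assumes "is_state n s" and "i \<in> free_pos n s"
  shows "count1 (set_letter1 n s i) = Suc (count1 s)"
proof -
  have "i < 2 * n" and "i \<notin> ones n s"
    using assms(2) by (auto simp: free_pos_eq_Diff_ones)
  then show ?thesis
    using assms(1) count1_eq_card_ones[of n "set_letter n s i 1"]
    by (simp add: set_letter1_eq_set_letter count1_eq_card_ones ones_set_letter)
qed

lemma inj_on_set_letter1: "is_state n s \<Longrightarrow> inj_on (set_letter1 n s) (free_pos n s)"
proof (rule inj_onI)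
  fix i j assume st: "is_state n s" and i: "i \<in> free_pos n s" and j: "j \<in> free_pos n s"
    and eq: "set_letter1 n s i = set_letter1 n s j"
  have "(joined s)[i := 1] = (joined s)[j := 1]"
    using arg_cong[OF eq, of joined] st i j
    by (simp add: set_letter1_eq_set_letter joined_set_letter free_pos_def)
  moreover have "i < length (joined s)" and "joined s ! i \<noteq> 1"
    using st i by (auto simp: free_pos_def letter_at_eq_joined_nth length_joined)
  ultimately show "i = j"
    by (metis nth_list_update_eq nth_list_update_neq)
qed

section \<open>The law of the replacement chain\<close>

lemma set_pmf_step:
  "free_pos n s \<noteq> {} \<Longrightarrow> set_pmf (step n s) = set_letter1 n s ` free_pos n s"
  by (simp add: step_def)

lemma pmf_step_set_letter1:
  assumes "is_state n s" and "i \<in> free_pos n s"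
  shows "pmf (step n s) (set_letter1 n s i) = 1 / card (free_pos n s)"
  using assms by (auto simp: step_def pmf_map_inj inj_on_set_letter1)

lemma free_pos_set_letter:
  assumes "is_state n s" and "i \<in> ones n s" and "c \<noteq> 1"
  shows "i \<in> free_pos n (set_letter n s i c)"
proof -
  have "i < 2 * n"
    using assms(2) by (simp add: ones_def)
  then show ?thesis
    using assms by (simp add: free_pos_eq_Diff_ones ones_set_letter)
qed

lemma set_letter1_set_letter:
  assumes "is_state n s" and "i \<in> ones n s"
  shows "set_letter1 n (set_letter n s i c) i = s"
proof -
  have "letter_at n s i = 1"
    using assms(2) by (simp add: ones_def)
  then show ?thesis
    using set_letter_letter_at[OF assms(1), of i] by (simp add: set_letter1_eq_set_letter)
qed

lemma set_letter_set_letter1: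
  "is_state n s \<Longrightarrow> set_letter n (set_letter1 n s i) i (letter_at n s i) = s"
  by (simp add: set_letter1_eq_set_letter set_letter_letter_at)

lemma mem_ones_set_letter1: "is_state n s \<Longrightarrow> i < 2 * n \<Longrightarrow> i \<in> ones n (set_letter1 n s i)"
  by (simp add: set_letter1_eq_set_letter ones_set_letter)

lemma inj_on_set_letter_ones:
  assumes "is_state n s" and "1 \<notin> C"
  shows "inj_on (\<lambda>(i, c). set_letter n s i c) (ones n s \<times> C)"
proof (rule inj_onI, clarify)
  fix i c j d assume ij: "i \<in> ones n s" "j \<in> ones n s" and cd: "c \<in> C" "d \<in> C"
    and "set_letter n s i c = set_letter n s j d"
  then have "joined (set_letter n s i c) = joined (set_letter n s j d)"
    by simp
  then have "(joined s)[i := c] = (joined s)[j := d]"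
    using assms(1) ij by (simp add: ones_def joined_set_letter)
  moreover have "i < length (joined s)" "j < length (joined s)" "joined s ! i = 1" "joined s ! j = 1"
    using ij assms(1) by (auto simp: ones_def letter_at_eq_joined_nth length_joined)
  moreover have "c \<noteq> 1" "d \<noteq> 1"
    using cd assms(2) by auto
  ultimately show "i = j \<and> c = d"
    by (rule list_update_eq_list_update_imp)
qed

definition rest_weight :: "nat pmf \<Rightarrow> nat list \<Rightarrow> real" where
  "rest_weight q xs = (\<Prod>x\<leftarrow>xs. if x = 1 then 1 else pmf q x)"

lemma rest_weight_list_update:
  assumes "i < length xs" and "xs ! i = 1" and "c \<noteq> 1"
  shows "rest_weight q (xs[i := c]) = pmf q c * rest_weight q xs"
  using assms prod_list_map_list_update[of i xs "\<lambda>x. if x = 1 then 1 else pmf q x" c]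
  by (simp add: rest_weight_def)

lemma set_subset_if_rest_weight_nonzero:
  "rest_weight q xs \<noteq> 0 \<Longrightarrow> set xs \<subseteq> insert 1 (set_pmf q)"
  by (auto simp: rest_weight_def prod_list_zero_iff set_pmf_iff split: if_splits)

fun state_pmf :: "nat pmf \<Rightarrow> nat \<Rightarrow> nat \<Rightarrow> (nat list \<times> nat list) pmf" where
  "state_pmf q n 0 = pair_pmf (word_pmf q n) (word_pmf q n)"
| "state_pmf q n (Suc k) = bind_pmf (state_pmf q n k) (step n)"

lemma length_traj: "t \<in> set_pmf (traj p m n j) \<Longrightarrow> length t = Suc j"
  by (induction j arbitrary: t) auto

lemma map_pmf_nth_traj_Suc:
  assumes "k \<le> j"
  shows "map_pmf (\<lambda>t. t ! k) (traj p m n (Suc j)) = map_pmf (\<lambda>t. t ! k) (traj p m n j)"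
proof -
  have "map_pmf (\<lambda>t. t ! k) (traj p m n (Suc j)) = bind_pmf (traj p m n j) (\<lambda>t. return_pmf (t ! k))"
    unfolding traj.simps map_bind_pmf
    using assms by (intro bind_pmf_cong) (auto simp: map_pmf_comp nth_append dest: length_traj)
  then show ?thesis
    by (simp add: map_pmf_def)
qed

lemma map_pmf_last_traj: "map_pmf last (traj p m n j) = state_pmf (letter0_pmf p m) n j"
proof (induction j)
  case 0
  then show ?case by (simp add: map_pmf_comp)
next
  case (Suc j)
  have "map_pmf last (traj p m n (Suc j)) = bind_pmf (traj p m n j) (\<lambda>t. step n (last t))"
    by (simp add: map_bind_pmf map_pmf_comp)
  also have "\<dots> = bind_pmf (map_pmf last (traj p m n j)) (step n)"
    by (simp add: bind_map_pmf)
  finally show ?case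
    using Suc.IH by simp
qed

lemma map_pmf_nth_traj:
  "k \<le> j \<Longrightarrow> map_pmf (\<lambda>t. t ! k) (traj p m n j) = state_pmf (letter0_pmf p m) n k"
proof (induction j)
  case 0
  then show ?case
    using map_pmf_last_traj[of p m n 0] by (simp add: map_pmf_comp)
next
  case (Suc j)
  show ?case
  proof (cases "k \<le> j")
    case True
    then show ?thesis
      by (simp only: map_pmf_nth_traj_Suc[OF True] Suc.IH[OF True])
  next
    case False
    then have "k = Suc j"
      using Suc.prems by simp
    then have "map_pmf (\<lambda>t. t ! k) (traj p m n (Suc j)) = map_pmf last (traj p m n (Suc j))"
      by (intro map_pmf_cong) (auto simp: nth_append dest!: length_traj)
    then show ?thesis
      using \<open>k = Suc j\<close> map_pmf_last_traj[of p m n "Suc j"] by (simp del: traj.simps)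
  qed
qed

lemma pmf_pair_word_pmf:
  "pmf (pair_pmf (word_pmf d n) (word_pmf d n)) s
     = (if is_state n s then (\<Prod>x\<leftarrow>joined s. pmf d x) else 0)"
  by (cases s) (simp add: pmf_pair pmf_word_pmf is_state_def joined_def)

text \<open>The \<open>k\<close> letters \<open>\<alpha>\<^sub>1\<close> occupy a uniformly random \<open>k\<close>-subset of the \<open>2n\<close> positions,
  the remaining letters are i.i.d. with law \<open>q\<close>.\<close>

definition state_density :: "nat pmf \<Rightarrow> nat \<Rightarrow> nat \<Rightarrow> nat list \<times> nat list \<Rightarrow> real" where
  "state_density q n k s =
     (if is_state n s \<and> count1 s = k then rest_weight q (joined s) / real (2 * n choose k) else 0)"

lemma pmf_state_pmf_0:
  assumes "1 \<notin> set_pmf q"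
  shows "pmf (state_pmf q n 0) s = state_density q n 0 s"
proof (cases "1 \<in> set (joined s)")
  case True
  moreover have "pmf q 1 = 0"
    using assms by (simp add: set_pmf_iff)
  ultimately have "(\<Prod>x\<leftarrow>joined s. pmf q x) = 0"
    by (simp add: prod_list_zero_iff)
  moreover have "count1 s \<noteq> 0"
    using True by (auto simp: count1_eq_count_list_joined count_list_0_iff)
  ultimately show ?thesis
    by (simp add: pmf_pair_word_pmf state_density_def)
next
  case False
  then have "(\<Prod>x\<leftarrow>joined s. pmf q x) = rest_weight q (joined s)"
    unfolding rest_weight_def by (intro arg_cong[where f = prod_list] map_cong) auto
  moreover have "count1 s = 0"
    using False by (simp add: count1_eq_count_list_joined count_list_0_iff)
  ultimately show ?thesis
    by (simp add: pmf_pair_word_pmf state_density_def)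
qed

lemma set_pmf_bind_step:
  assumes "\<forall>s\<in>set_pmf M. is_state n s \<and> count1 s = k" and "k < 2 * n"
    and "s' \<in> set_pmf (bind_pmf M (step n))"
  shows "is_state n s' \<and> count1 s' = Suc k"
proof -
  obtain s where s: "s \<in> set_pmf M" and s': "s' \<in> set_pmf (step n s)"
    using assms(3) by auto
  have "card (free_pos n s) = 2 * n - k"
    using assms(1) s by (simp add: card_free_pos)
  then have "free_pos n s \<noteq> {}"
    using assms(2) by auto
  then obtain i where "i \<in> free_pos n s" and "s' = set_letter1 n s i"
    using s' set_pmf_step by blast
  then show ?thesis
    using assms(1) s count1_set_letter1 by (simp add: set_letter1_eq_set_letter)
qed

lemma pmf_bind_step_eq_sum_predecessors:
  assumes M: "\<forall>s\<in>set_pmf M. is_state n s \<and> free_pos n s \<noteq> {} \<and> set (joined s) \<subseteq> insert 1 (set_pmf q)"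
    and q: "1 \<notin> set_pmf q" "finite (set_pmf q)" and s': "is_state n s'"
  shows "pmf (bind_pmf M (step n)) s' =
    (\<Sum>(i, c) \<in> ones n s' \<times> set_pmf q.
       pmf M (set_letter n s' i c) * pmf (step n (set_letter n s' i c)) s')"
proof -
  define pre where "pre = (\<lambda>(i, c). set_letter n s' i c)"
  have "s \<in> pre ` (ones n s' \<times> set_pmf q)"
    if s: "s \<in> set_pmf M" and "pmf (step n s) s' \<noteq> 0" for s
  proof -
    have "s' \<in> set_pmf (step n s)"
      using that(2) by (simp add: set_pmf_iff)
    then obtain i where i: "i \<in> free_pos n s" and s'_eq: "s' = set_letter1 n s i"
      using M s set_pmf_step by blast
    have st: "is_state n s" and "i < 2 * n" and "letter_at n s i \<noteq> 1"
      using M s i by (auto simp: free_pos_def)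
    moreover have "letter_at n s i \<in> set (joined s)"
      using st \<open>i < 2 * n\<close> by (simp add: letter_at_eq_joined_nth length_joined)
    ultimately have "letter_at n s i \<in> set_pmf q"
      using M s by auto
    then show ?thesis
      using st \<open>i < 2 * n\<close> mem_ones_set_letter1 set_letter_set_letter1
      unfolding pre_def s'_eq by (metis (no_types, lifting) SigmaI case_prod_conv image_eqI)
  qed
  then have "pmf (bind_pmf M (step n)) s' =
      (\<Sum>s \<in> pre ` (ones n s' \<times> set_pmf q). pmf (step n s) s' * pmf M s)"
    unfolding pmf_bind using q by (intro integral_measure_pmf_real) auto
  also have "\<dots> = (\<Sum>x \<in> ones n s' \<times> set_pmf q. pmf (step n (pre x)) s' * pmf M (pre x))"
    using inj_on_set_letter_ones[OF s' q(1)] by (simp add: pre_def sum.reindex)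
  finally show ?thesis
    by (simp add: pre_def case_prod_beta mult.commute)
qed

lemma pmf_step_from_predecessor:
  assumes "is_state n s" and "i \<in> ones n s" and "c \<noteq> 1"
  shows "pmf (step n (set_letter n s i c)) s = 1 / real (2 * n - (count1 s - 1))"
proof -
  let ?s0 = "set_letter n s i c"
  have "i < 2 * n"
    using assms(2) by (simp add: ones_def)
  then have "count1 ?s0 = count1 s - 1"
    using assms count1_eq_card_ones[of n ?s0] by (simp add: count1_eq_card_ones ones_set_letter)
  then show ?thesis
    using pmf_step_set_letter1[of n ?s0 i] assms
    by (simp add: free_pos_set_letter set_letter1_set_letter card_free_pos)
qed

lemma state_density_set_letter:
  assumes "is_state n s" and "i \<in> ones n s" and "c \<noteq> 1" and "count1 s = Suc k"
  shows "state_density q n k (set_letter n s i c) = pmf q c * rest_weight q (joined s) / real (2 * n choose k)"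
proof -
  have "i < 2 * n" and "joined s ! i = 1"
    using assms(1,2) by (auto simp: ones_def letter_at_eq_joined_nth)
  moreover have "count1 (set_letter n s i c) = k"
    using assms \<open>i < 2 * n\<close> count1_eq_card_ones[of n "set_letter n s i c"]
    by (simp add: ones_set_letter count1_eq_card_ones)
  ultimately show ?thesis
    using assms(1,3) by (simp add: state_density_def joined_set_letter rest_weight_list_update length_joined)
qed

lemma pmf_bind_step_state_density:
  assumes q: "1 \<notin> set_pmf q" "finite (set_pmf q)" and "k < 2 * n"
    and M: "\<And>s. pmf M s = state_density q n k s"
  shows "pmf (bind_pmf M (step n)) s' = state_density q n (Suc k) s'"
proof -
  have support: "is_state n s \<and> count1 s = k \<and> set (joined s) \<subseteq> insert 1 (set_pmf q)"
    if "s \<in> set_pmf M" for s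
    using that M[of s] set_subset_if_rest_weight_nonzero[of q "joined s"]
    by (auto simp: set_pmf_iff state_density_def split: if_splits)
  show ?thesis
  proof (cases "is_state n s' \<and> count1 s' = Suc k")
    case False
    then have "s' \<notin> set_pmf (bind_pmf M (step n))"
      using set_pmf_bind_step[of M n k] support \<open>k < 2 * n\<close> by blast
    then have "pmf (bind_pmf M (step n)) s' = 0"
      by (rule iffD2[OF pmf_eq_0_set_pmf])
    then show ?thesis
      using False by (auto simp: state_density_def)
  next
    case True
    then have s': "is_state n s'" and "count1 s' = Suc k"
      by auto
    define w where "w = rest_weight q (joined s') / (real (2 * n choose k) * real (2 * n - k))"
    have summand: "pmf M (set_letter n s' i c) * pmf (step n (set_letter n s' i c)) s' = w * pmf q c"
      if "i \<in> ones n s'" and "c \<in> set_pmf q" for i c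
    proof -
      have "c \<noteq> 1"
        using that(2) q(1) by auto
      then show ?thesis
        using pmf_step_from_predecessor[OF s' that(1)] state_density_set_letter[OF s' that(1)]
          \<open>count1 s' = Suc k\<close> by (simp add: M w_def)
    qed
    have "free_pos n s \<noteq> {}" if "s \<in> set_pmf M" for s
      using support[OF that] \<open>k < 2 * n\<close> card_free_pos[of n s] by fastforce
    then have "pmf (bind_pmf M (step n)) s' = (\<Sum>(i, c) \<in> ones n s' \<times> set_pmf q.
        pmf M (set_letter n s' i c) * pmf (step n (set_letter n s' i c)) s')"
      using support q s' by (intro pmf_bind_step_eq_sum_predecessors) auto
    also have "\<dots> = (\<Sum>(i, c) \<in> ones n s' \<times> set_pmf q. w * pmf q c)"
      by (intro sum.cong) (auto simp: summand)
    also have "\<dots> = (\<Sum>i \<in> ones n s'. w * (\<Sum>c \<in> set_pmf q. pmf q c))"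
      by (simp add: sum.cartesian_product[symmetric] sum_distrib_left)
    also have "\<dots> = w * card (ones n s')"
      using q by (simp add: sum_pmf_eq_1)
    also have "\<dots> = rest_weight q (joined s') / real (2 * n choose Suc k)"
    proof -
      have "real (2 * n choose k) * real (2 * n - k) = real (2 * n choose Suc k) * real (Suc k)"
        by (metis binomial_mult_diff of_nat_mult)
      then show ?thesis
        using s' \<open>count1 s' = Suc k\<close> by (simp add: w_def count1_eq_card_ones del: of_nat_Suc)
    qed
    finally show ?thesis
      using True by (simp add: state_density_def)
  qed
qed

lemma pmf_state_pmf:
  assumes "1 \<notin> set_pmf q" and "finite (set_pmf q)" and "k \<le> 2 * n"
  shows "pmf (state_pmf q n k) s = state_density q n k s"
  using assms(3)
proof (induction k arbitrary: s)
  case 0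
  show ?case
    by (rule pmf_state_pmf_0[OF assms(1)])
next
  case (Suc k)
  then show ?case
    using assms(1,2) by (simp add: pmf_bind_step_state_density)
qed

section \<open>Conditioning the i.i.d. words on the number of letters \<open>\<alpha>\<^sub>1\<close>\<close>

lemma is_state_if_in_set_pair_word_pmf:
  "s \<in> set_pmf (pair_pmf (word_pmf d n) (word_pmf d n)) \<Longrightarrow> is_state n s"
  unfolding set_pmf_iff pmf_pair_word_pmf by (auto split: if_splits)

lemma count1_le: "is_state n s \<Longrightarrow> count1 s \<le> 2 * n"
  using card_mono[OF _ ones_subset] by (simp add: count1_eq_card_ones)

locale letter_probs =
  fixes p :: "nat \<Rightarrow> real" and m :: nat
  assumes two_le_m: "2 \<le> m" and pos: "\<forall>k\<in>{1..m}. 0 < p k" and sum_eq_1: "(\<Sum>k=1..m. p k) = 1"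
begin

lemma sum_from_2: "(\<Sum>k=2..m. p k) = 1 - p 1"
  using two_le_m sum_eq_1 sum.atLeast_Suc_atMost[of 1 m p] by (simp add: numeral_2_eq_2)

lemma p1_bounds: "0 < p 1" "p 1 < 1"
proof -
  show "0 < p 1"
    using pos two_le_m by auto
  have "p 2 \<le> (\<Sum>k=2..m. p k)"
    using pos two_le_m by (intro member_le_sum) (auto intro: less_imp_le)
  moreover have "0 < p 2"
    using pos two_le_m by auto
  ultimately show "p 1 < 1"
    using sum_from_2 by simp
qed

lemma pmf_letter_pmf: "pmf (letter_pmf p m) x = (if x \<in> {1..m} then p x else 0)"
  unfolding letter_pmf_def using pos sum_eq_1
  by (intro pmf_embed_pmf_finite) (auto intro: less_imp_le)

lemma pmf_letter0_pmf: "pmf (letter0_pmf p m) x = (if x \<in> {2..m} then p x / (1 - p 1) else 0)"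
  unfolding letter0_pmf_def using pos p1_bounds sum_from_2
  by (intro pmf_embed_pmf_finite) (auto intro: less_imp_le simp flip: sum_divide_distrib)

lemma set_pmf_letter0_pmf: "set_pmf (letter0_pmf p m) = {2..m}"
proof -
  have "p x / (1 - p 1) \<noteq> 0" if "x \<in> {2..m}" for x
    using that pos[rule_format, of x] p1_bounds by auto
  then show ?thesis
    by (auto simp: set_pmf_iff pmf_letter0_pmf split: if_splits)
qed

lemma pmf_letter_pmf_eq:
  "pmf (letter_pmf p m) x = (if x = 1 then p 1 else (1 - p 1) * pmf (letter0_pmf p m) x)"
  using p1_bounds two_le_m by (auto simp: pmf_letter_pmf pmf_letter0_pmf)

lemma pmf_pair_word_letter_pmf:
  "pmf (pair_pmf (word_pmf (letter_pmf p m) n) (word_pmf (letter_pmf p m) n)) s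
     = (if is_state n s then p 1 ^ count1 s * (1 - p 1) ^ (2 * n - count1 s)
          * rest_weight (letter0_pmf p m) (joined s) else 0)"
proof -
  have "pmf (letter_pmf p m) = (\<lambda>x. if x = 1 then p 1 else (1 - p 1) * pmf (letter0_pmf p m) x)"
    by (simp add: fun_eq_iff pmf_letter_pmf_eq)
  then show ?thesis
    by (simp add: pmf_pair_word_pmf prod_list_map_if_eq_mult rest_weight_def length_joined
        count1_eq_count_list_joined)
qed

lemma cond_pmf_count1_eq_state_pmf:
  assumes "k \<le> 2 * n"
  defines "XY \<equiv> pair_pmf (word_pmf (letter_pmf p m) n) (word_pmf (letter_pmf p m) n)"
  shows "cond_pmf XY {s. count1 s = k} = state_pmf (letter0_pmf p m) n k"
proof (rule pmf_eq_if_proportional)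
  let ?q = "letter0_pmf p m"
  have q: "1 \<notin> set_pmf ?q" "finite (set_pmf ?q)"
    by (simp_all add: set_pmf_letter0_pmf)
  obtain s where "s \<in> set_pmf (state_pmf ?q n k)"
    using set_pmf_not_empty[of "state_pmf ?q n k"] by blast
  then have "0 < state_density ?q n k s"
    using pmf_state_pmf[OF q assms(1)] pmf_positive by metis
  then have "is_state n s" "count1 s = k" "0 < rest_weight ?q (joined s)"
    by (auto simp: state_density_def zero_less_divide_iff split: if_splits)
  then have "pmf XY s \<noteq> 0"
    using p1_bounds by (simp add: XY_def pmf_pair_word_letter_pmf)
  then have nonempty: "set_pmf XY \<inter> {s. count1 s = k} \<noteq> {}"
    using \<open>count1 s = k\<close> by (auto simp flip: set_pmf_iff)
  fix s
  show "pmf (cond_pmf XY {s. count1 s = k}) s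
    = p 1 ^ k * (1 - p 1) ^ (2 * n - k) * real (2 * n choose k) / measure_pmf.prob XY {s. count1 s = k}
      * pmf (state_pmf ?q n k) s"
    unfolding pmf_cond[OF nonempty] pmf_state_pmf[OF q assms(1)]
    using assms(1) by (auto simp: state_density_def XY_def pmf_pair_word_letter_pmf)
qed

end

theorem lemma2p1:
  fixes p :: "nat \<Rightarrow> real" and m n :: nat
  assumes "m \<ge> 2"
    and "\<forall>k\<in>{1..m}. p k > 0"
    and "(\<Sum>k=1..m. p k) = 1"
  defines "XY \<equiv> pair_pmf (word_pmf (letter_pmf p m) n) (word_pmf (letter_pmf p m) n)"
    and "T \<equiv> traj p m n (2 * n)"
  shows "(\<forall>k \<le> 2 * n. map_pmf (\<lambda>t. t ! k) T = cond_pmf XY {s. count1 s = k})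
         \<and> map_pmf (\<lambda>(N, t). t ! N) (pair_pmf (map_pmf count1 XY) T) = XY"
proof -
  interpret letter_probs p m
    using assms(1-3) by unfold_locales
  have layers: "map_pmf (\<lambda>t. t ! k) T = cond_pmf XY {s. count1 s = k}" if "k \<le> 2 * n" for k
    using that by (simp add: T_def XY_def map_pmf_nth_traj cond_pmf_count1_eq_state_pmf)
  have "count1 s \<le> 2 * n" if "s \<in> set_pmf XY" for s
    using that unfolding XY_def by (intro count1_le is_state_if_in_set_pair_word_pmf)
  then have "map_pmf (\<lambda>(N, t). t ! N) (pair_pmf (map_pmf count1 XY) T)
      = bind_pmf XY (\<lambda>s. cond_pmf XY {s'. count1 s = count1 s'})"
    by (auto simp: pair_pmf_def map_bind_pmf bind_map_pmf map_pmf_def[symmetric] map_pmf_comp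
        layers eq_commute intro!: bind_pmf_cong)
  also have "\<dots> = XY"
    by (rule bind_cond_pmf_cancel) (auto simp: eq_commute)
  finally show ?thesis
    using layers by simp
qed

end
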